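(* Let $q\geq2$ and $0<\alpha<1/q$. There exists a deterministic algorithm for Anti-$q$-SG which on every input of length $n$ incurs a cost of at most $\alpha n$ and which reads $$b=K_{1/q}(\alpha)\,n+O(\log n+\log\log q)=(1-h_q(1-\alpha))\,n\log_2q+O(\log n+\log\log q)$$ bits of advice.
   Context: Anti-$q$-SG: inputs $(n,x_1,\dots,x_n)$ with $x_i\in[q]$; in round $i$ the algorithm knows $n,x_1,\dots,x_{i-1}$ and outputs $y_i\in[q]$, paying $1$ if $y_i=x_i$ and $0$ otherwise; $n$ is the length. Advice is read from an infinite tape prepared by an oracle knowing the whole input. $K_y(x)=x\log_2(x/y)+(1-x)\log_2((1-x)/(1-y))$; $h_q(x)=x\log_q(q-1)-x\log_qx-(1-x)\log_q(1-x)$. *)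

theory Defs
  imports Complex_Main
begin

definition K :: "real \<Rightarrow> real \<Rightarrow> real" where
  "K y x = x * log 2 (x / y) + (1 - x) * log 2 ((1 - x) / (1 - y))"

definition h :: "nat \<Rightarrow> real \<Rightarrow> real" where
  "h q x = x * log (real q) (real q - 1) - x * log (real q) x - (1 - x) * log (real q) (1 - x)"

(* Symbols are [q] = {0..<q}.  A deterministic online algorithm with advice is a function
   alg n prefix tape: given the length n, the already revealed prefix x_1..x_{i-1}
   (as a list of length i-1) and the infinite advice tape, it outputs y_i. *)
type_synonym alg = "nat \<Rightarrow> nat list \<Rightarrow> (nat \<Rightarrow> bool) \<Rightarrow> nat"

definition valid_alg :: "nat \<Rightarrow> alg \<Rightarrow> bool" where
  "valid_alg q A \<longleftrightarrow> (\<forall>n p t. A n p t < q)"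

definition cost :: "alg \<Rightarrow> nat list \<Rightarrow> (nat \<Rightarrow> bool) \<Rightarrow> nat" where
  "cost A x t = card {i. i < length x \<and> A (length x) (take i x) t = x ! i}"

definition reads_at_most :: "alg \<Rightarrow> nat list \<Rightarrow> (nat \<Rightarrow> bool) \<Rightarrow> nat \<Rightarrow> bool" where
  "reads_at_most A x t b \<longleftrightarrow>
     (\<forall>t'. (\<forall>j<b. t' j = t j) \<longrightarrow>
        (\<forall>i<length x. A (length x) (take i x) t' = A (length x) (take i x) t))"

end

theory Submission
  imports Defs
begin

text \<open>Let \<open>k = \<lfloor>\<alpha> n\<rfloor>\<close>. Every word of \<open>[q]\<^sup>n\<close> agrees in exactly \<open>k\<close> positions with
  \<open>L = (n choose k) (q - 1)\<^sup>n\<^sup>-\<^sup>k\<close> words, so a greedy averaging argument produces a list of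
  about \<open>(q\<^sup>n / L) \<cdot> n ln q\<close> words such that every input agrees with some member in at most
  \<open>k\<close> positions. The oracle writes the index of such a member on the tape and the algorithm
  plays it letter by letter, paying exactly the number of agreements. The index costs
  \<open>log\<^sub>2 (q\<^sup>n / L) + O(log n + log log q)\<close> bits, and \<open>log\<^sub>2 (q\<^sup>n / L) \<le> K\<^bsub>1/q\<^esub>(\<alpha>) n + O(log n)\<close>
  because the binomial weight \<open>(n choose k) \<alpha>\<^sup>k (1 - \<alpha>)\<^sup>n\<^sup>-\<^sup>k\<close> at \<open>k = \<lfloor>\<alpha> n\<rfloor>\<close> is at least
  \<open>1 / (2 (n + 1))\<close>.\<close>

section \<open>Advice tapes\<close>

definition tape_value :: "nat \<Rightarrow> (nat \<Rightarrow> bool) \<Rightarrow> nat" where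
  "tape_value b t = horner_sum of_bool 2 (map t [0..<b])"

lemma tape_value_bit: "j < 2 ^ b \<Longrightarrow> tape_value b (bit j) = j"
  unfolding tape_value_def by (simp add: horner_sum_bit_eq_take_bit take_bit_nat_eq_self)

lemma tape_value_cong:
  assumes "\<And>i. i < b \<Longrightarrow> t' i = t i"
  shows "tape_value b t' = tape_value b t"
proof -
  have "map t' [0..<b] = map t [0..<b]"
    using assms by (simp add: map_eq_conv)
  then show ?thesis unfolding tape_value_def by (rule arg_cong)
qed

section \<open>Agreements between words\<close>

fun agreements :: "'a list \<Rightarrow> 'a list \<Rightarrow> nat" where
  "agreements (a # x) (b # y) = of_bool (a = b) + agreements x y"
| "agreements _ _ = 0"

lemma agreements_eq_sum:
  "length y = length x \<Longrightarrow> agreements x y = (\<Sum>i<length x. of_bool (y ! i = x ! i))"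
proof (induction x arbitrary: y)
  case Nil then show ?case by simp
next
  case (Cons a x)
  then show ?case by (cases y) (simp_all add: sum.lessThan_Suc_shift del: sum.lessThan_Suc sum_of_bool_eq)
qed

lemma agreements_eq_card:
  assumes "length y = length x"
  shows "agreements x y = card {i. i < length x \<and> y ! i = x ! i}"
proof -
  have "{i. i < length x \<and> y ! i = x ! i} = {..<length x} \<inter> {i. y ! i = x ! i}"
    by auto
  then show ?thesis using assms by (simp add: agreements_eq_sum)
qed

definition words :: "nat \<Rightarrow> nat \<Rightarrow> nat list set" where
  "words q n = {xs. set xs \<subseteq> {..<q} \<and> length xs = n}"

lemma finite_words: "finite (words q n)"
  unfolding words_def by (rule finite_lists_length_eq) simp

lemma card_words: "card (words q n) = q ^ n"
  unfolding words_def by (subst card_lists_length_eq) simp_all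

lemma replicate_in_words: "a < q \<Longrightarrow> replicate n a \<in> words q n"
  by (auto simp: words_def)

lemma card_words_Suc_filter:
  "card {y \<in> words q (Suc n). P y} = (\<Sum>b<q. card {y \<in> words q n. P (b # y)})"
proof -
  have split: "{y \<in> words q (Suc n). P y} = (\<Union>b<q. (#) b ` {y \<in> words q n. P (b # y)})"
    by (auto simp: words_def length_Suc_conv)
  have "card (\<Union>b<q. (#) b ` {y \<in> words q n. P (b # y)})
      = (\<Sum>b<q. card ((#) b ` {y \<in> words q n. P (b # y)}))"
    by (rule card_UN_disjoint) (auto simp: finite_words)
  then show ?thesis
    unfolding split by (simp add: card_image)
qed

lemma binomial_power_Suc:
  fixes r :: nat
  shows "(Suc n choose Suc k) * r ^ (Suc n - Suc k)
     = (n choose k) * r ^ (n - k) + r * ((n choose Suc k) * r ^ (n - Suc k))"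
proof -
  have "(n choose Suc k) * r ^ (n - k) = r * ((n choose Suc k) * r ^ (n - Suc k))"
    by (cases "k < n") (auto simp: Suc_diff_Suc[symmetric] binomial_eq_0)
  then show ?thesis by (simp add: algebra_simps)
qed

lemma card_agreements_eq:
  "x \<in> words q n \<Longrightarrow> card {y \<in> words q n. agreements x y = k} = (n choose k) * (q - 1) ^ (n - k)"
proof (induction n arbitrary: x k)
  case 0
  then have "x = []" and "words q 0 = {[]}" by (auto simp: words_def)
  then show ?case by (cases k) auto
next
  case (Suc n)
  then obtain a x' where x: "x = a # x'" and a: "a < q" and x': "x' \<in> words q n"
    by (cases x) (auto simp: words_def)
  have "card {y \<in> words q (Suc n). agreements x y = k}
      = (\<Sum>b<q. card {y \<in> words q n. of_bool (a = b) + agreements x' y = k})"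
    unfolding x by (subst card_words_Suc_filter) simp
  also have "\<dots> = card {y \<in> words q n. Suc (agreements x' y) = k}
      + (q - 1) * ((n choose k) * (q - 1) ^ (n - k))"
    using a Suc.IH[OF x'] by (subst sum.remove[of _ a]) auto
  also have "\<dots> = (Suc n choose k) * (q - 1) ^ (Suc n - k)"
  proof (cases k)
    case (Suc k')
    then show ?thesis using Suc.IH[OF x'] binomial_power_Suc[of n k' "q - 1"] by simp
  qed simp
  finally show ?case .
qed

lemma binomial_pred_power_le_power:
  "0 < q \<Longrightarrow> (n choose k) * (q - 1) ^ (n - k) \<le> q ^ n"
proof -
  assume "0 < q"
  then have "(n choose k) * (q - 1) ^ (n - k) = card {y \<in> words q n. agreements (replicate n 0) y = k}"
    by (intro card_agreements_eq[symmetric] replicate_in_words)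
  also have "\<dots> \<le> card (words q n)"
    by (rule card_mono[OF finite_words]) auto
  finally show ?thesis
    by (simp add: card_words)
qed

section \<open>Greedy covering\<close>

lemma exists_heavy_element:
  assumes W: "finite W" "W \<noteq> {}" and U: "U \<subseteq> W"
    and deg: "\<And>x. x \<in> U \<Longrightarrow> L \<le> card {y \<in> W. R x y}"
  shows "\<exists>y\<in>W. card U * L \<le> card {x \<in> U. R x y} * card W"
proof (rule ccontr)
  assume "\<not> ?thesis"
  then have light: "\<And>y. y \<in> W \<Longrightarrow> card {x \<in> U. R x y} * card W < card U * L"
    by (simp add: not_le)
  have "finite U" using W U finite_subset by blast
  have "card U * L * card W = (\<Sum>x\<in>U. L) * card W"
    by simp
  also have "\<dots> \<le> (\<Sum>x\<in>U. card {y \<in> W. R x y}) * card W"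
    using deg by (intro mult_right_mono sum_mono) auto
  also have "(\<Sum>x\<in>U. card {y \<in> W. R x y}) = (\<Sum>y\<in>W. card {x \<in> U. R x y})"
    using sum.swap_restrict[OF \<open>finite U\<close> W(1), of "\<lambda>_ _. 1::nat" R] by simp
  also have "(\<Sum>y\<in>W. card {x \<in> U. R x y}) * card W = (\<Sum>y\<in>W. card {x \<in> U. R x y} * card W)"
    by (simp add: sum_distrib_right)
  also have "\<dots> < (\<Sum>y\<in>W. card U * L)"
    using W light by (intro sum_strict_mono) auto
  also have "\<dots> = card U * L * card W"
    by simp
  finally show False
    by simp
qed

lemma greedy_cover_residue:
  assumes W: "finite W" "W \<noteq> {}" and deg: "\<And>x. x \<in> W \<Longrightarrow> L \<le> card {y \<in> W. R x y}"
  shows "\<exists>Ys. length Ys = m \<and> set Ys \<subseteq> W \<and>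
           real (card {x \<in> W. \<forall>y\<in>set Ys. \<not> R x y}) \<le> card W * (1 - L / card W) ^ m"
proof (induction m)
  case 0
  show ?case by (intro exI[of _ "[]"]) simp
next
  case (Suc m)
  then obtain Ys where Ys: "length Ys = m" "set Ys \<subseteq> W"
    and residue: "real (card {x \<in> W. \<forall>y\<in>set Ys. \<not> R x y}) \<le> card W * (1 - L / card W) ^ m"
    by blast
  define U where "U = {x \<in> W. \<forall>y\<in>set Ys. \<not> R x y}"
  obtain y where y: "y \<in> W" and heavy: "card U * L \<le> card {x \<in> U. R x y} * card W"
    using exists_heavy_element[OF W, of U L R] deg unfolding U_def by auto
  have "finite U" using W(1) unfolding U_def by simp
  have "0 < card W" using W by (simp add: card_gt_0_iff)
  obtain x where "x \<in> W" using W by blast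
  then have "L \<le> card W"
    using order_trans[OF deg card_mono[OF W(1)]] by blast
  then have shrink: "0 \<le> 1 - L / card W"
    using \<open>0 < card W\<close> by (simp add: field_simps)
  have "real (card U) * L \<le> card {x \<in> U. R x y} * card W"
    using heavy by (metis of_nat_le_iff of_nat_mult)
  then have covered: "card U * (L / card W) \<le> card {x \<in> U. R x y}"
    using \<open>0 < card W\<close> by (subst times_divide_eq_right, subst pos_divide_le_eq) auto
  have "card {x \<in> U. R x y} \<le> card U"
    using \<open>finite U\<close> by (rule card_mono) auto
  then have "real (card (U - {x \<in> U. R x y})) = real (card U) - real (card {x \<in> U. R x y})"
    using \<open>finite U\<close> by (simp add: card_Diff_subset of_nat_diff)
  also have "\<dots> \<le> card U * (1 - L / card W)"
    using covered by (simp only: right_diff_distrib mult_1_right diff_left_mono)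
  also have "\<dots> \<le> card W * (1 - L / card W) ^ m * (1 - L / card W)"
    using residue shrink unfolding U_def by (intro mult_right_mono) auto
  finally have "real (card (U - {x \<in> U. R x y})) \<le> card W * (1 - L / card W) ^ Suc m"
    by (simp add: ac_simps)
  moreover have "{x \<in> W. \<forall>z\<in>set (y # Ys). \<not> R x z} = U - {x \<in> U. R x y}"
    unfolding U_def by auto
  ultimately show ?case
    using Ys y by (intro exI[of _ "y # Ys"]) auto
qed

lemma exists_covering_list:
  assumes W: "finite W" "W \<noteq> {}" and deg: "\<And>x. x \<in> W \<Longrightarrow> L \<le> card {y \<in> W. R x y}"
    and m: "card W * ln (card W) < m * L"
  shows "\<exists>Ys. length Ys = m \<and> set Ys \<subseteq> W \<and> (\<forall>x\<in>W. \<exists>y\<in>set Ys. R x y)"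
proof -
  define N where "N = real (card W)"
  obtain Ys where Ys: "length Ys = m" "set Ys \<subseteq> W"
    and residue: "real (card {x \<in> W. \<forall>y\<in>set Ys. \<not> R x y}) \<le> N * (1 - L / N) ^ m"
    using greedy_cover_residue[OF W, of L R m] deg unfolding N_def by blast
  have "0 < N" using W unfolding N_def by (simp add: card_gt_0_iff)
  obtain x where "x \<in> W" using W by blast
  then have "L \<le> N"
    using order_trans[OF deg card_mono[OF W(1)]] unfolding N_def by fastforce
  have "ln N < m * L / N"
    unfolding pos_less_divide_eq[OF \<open>0 < N\<close>] by (subst mult.commute) (use m in \<open>simp add: N_def\<close>)
  have "(1 - L / N) ^ m \<le> exp (- (L / N)) ^ m"
    using \<open>L \<le> N\<close> \<open>0 < N\<close> exp_ge_add_one_self[of "- (L / N)"]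
    by (intro power_mono) (auto simp: field_simps)
  also have "\<dots> = exp (- (m * L / N))"
    by (simp add: exp_of_nat_mult[symmetric])
  also have "\<dots> < exp (- ln N)"
    using \<open>ln N < m * L / N\<close> by simp
  also have "\<dots> = 1 / N"
    using \<open>0 < N\<close> by (simp add: exp_minus divide_inverse)
  finally have "N * (1 - L / N) ^ m < N * (1 / N)"
    using \<open>0 < N\<close> by (rule mult_strict_left_mono)
  then have "real (card {x \<in> W. \<forall>y\<in>set Ys. \<not> R x y}) < 1"
    using residue \<open>0 < N\<close> by simp
  then have "{x \<in> W. \<forall>y\<in>set Ys. \<not> R x y} = {}"
    using W(1) by simp
  then show ?thesis
    using Ys by blast
qed

section \<open>Binomial weights\<close>

definition binomial_weight :: "nat \<Rightarrow> nat \<Rightarrow> real \<Rightarrow> real" where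
  "binomial_weight n k x = real (n choose k) * x ^ k * (1 - x) ^ (n - k)"

lemma binomial_weight_nonneg: "0 \<le> x \<Longrightarrow> x \<le> 1 \<Longrightarrow> 0 \<le> binomial_weight n k x"
  by (simp add: binomial_weight_def)

lemma sum_binomial_weight: "(\<Sum>k\<le>n. binomial_weight n k x) = 1"
  using binomial_ring[of x "1 - x" n] by (simp add: binomial_weight_def)

lemma binomial_weight_Suc_ratio:
  "binomial_weight n (Suc j) x * Suc j * (1 - x) = binomial_weight n j x * (n - j) * x"
proof (cases "j < n")
  case True
  have "real (n choose Suc j) * Suc j = real (n choose j) * (n - j)"
    using binomial_absorption[of j n] binomial_absorb_comp[of n j]
    by (metis mult.commute of_nat_mult)
  moreover have "(1 - x) ^ (n - j) = (1 - x) * (1 - x) ^ (n - Suc j)"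
    using True by (simp flip: power_Suc add: Suc_diff_Suc)
  ultimately show ?thesis
    unfolding binomial_weight_def by (simp add: ac_simps)
qed (simp add: binomial_weight_def)

lemma binomial_weight_le_Suc:
  fixes x :: real
  assumes "0 < x" "x < 1" "Suc i \<le> x * n"
  shows "binomial_weight n i x \<le> binomial_weight n (Suc i) x"
proof -
  have "i \<le> n"
    using assms mult_left_le_one_le[of n x] by linarith
  then have "Suc i * (1 - x) \<le> (n - i) * x"
    using assms by (simp add: of_nat_diff algebra_simps)
  then have "binomial_weight n i x * (Suc i * (1 - x)) \<le> binomial_weight n (Suc i) x * (Suc i * (1 - x))"
    using binomial_weight_Suc_ratio[of n i x] binomial_weight_nonneg[of x n i] assms
    by (metis less_imp_le mult.assoc mult_left_mono)
  then show ?thesis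
    using \<open>x < 1\<close> by (simp add: mult_le_cancel_right)
qed

lemma binomial_weight_Suc_le:
  fixes x :: real
  assumes "0 < x" "x < 1" "x * n + x \<le> Suc i"
  shows "binomial_weight n (Suc i) x \<le> binomial_weight n i x"
proof -
  have "(n - i) * x \<le> Suc i * (1 - x)"
  proof (cases "i \<le> n")
    case True
    then show ?thesis using assms by (simp add: of_nat_diff algebra_simps)
  next
    case False
    then show ?thesis using \<open>x < 1\<close> by simp
  qed
  then have "binomial_weight n (Suc i) x * (Suc i * (1 - x)) \<le> binomial_weight n i x * (Suc i * (1 - x))"
    using binomial_weight_Suc_ratio[of n i x] binomial_weight_nonneg[of x n i] assms
    by (metis less_imp_le mult.assoc mult_left_mono)
  then show ?thesis
    using \<open>x < 1\<close> by (simp add: mult_le_cancel_right)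
qed

lemma binomial_weight_Suc_floor_le:
  fixes x :: real and n :: nat
  assumes "0 < x" "x < 1"
  defines "k \<equiv> nat \<lfloor>x * n\<rfloor>"
  shows "binomial_weight n (Suc k) x * (1 - x) \<le> binomial_weight n k x"
proof -
  have "real (n - k) * x \<le> n * x"
    using \<open>0 < x\<close> by (intro mult_right_mono) auto
  also have "\<dots> \<le> Suc k"
    using \<open>0 < x\<close> unfolding k_def by (simp add: mult.commute of_nat_nat) linarith
  finally have "binomial_weight n k x * ((n - k) * x) \<le> binomial_weight n k x * Suc k"
    using assms by (intro mult_left_mono binomial_weight_nonneg) auto
  then have "binomial_weight n (Suc k) x * (1 - x) * Suc k \<le> binomial_weight n k x * Suc k"
    using binomial_weight_Suc_ratio[of n k x] by (simp add: ac_simps)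
  then show ?thesis
    by (simp add: mult_le_cancel_right)
qed

text \<open>The weights rise up to index \<open>\<lfloor>x n\<rfloor>\<close> and fall from \<open>\<lfloor>x n\<rfloor> + 1\<close> on, and the
  step between these two indices gains at most the factor \<open>1 / (1 - x) \<le> 2\<close>.\<close>

lemma binomial_weight_floor_dominates:
  fixes x :: real and n :: nat
  assumes "0 < x" "x \<le> 1/2"
  defines "k \<equiv> nat \<lfloor>x * n\<rfloor>"
  shows "binomial_weight n j x \<le> 2 * binomial_weight n k x"
proof -
  have "x < 1"
    using assms by simp
  have nonneg: "0 \<le> binomial_weight n i x" for i
    using assms by (simp add: binomial_weight_nonneg)
  have "real k \<le> x * n" and "x * n < k + 1"
    using \<open>0 < x\<close> unfolding k_def by (simp_all add: of_nat_nat) linarith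
  have "binomial_weight n (Suc k) x * (1/2) \<le> binomial_weight n (Suc k) x * (1 - x)"
    using \<open>x \<le> 1/2\<close> nonneg by (intro mult_left_mono) auto
  then have Suc_k: "binomial_weight n (Suc k) x \<le> 2 * binomial_weight n k x"
    using binomial_weight_Suc_floor_le[OF \<open>0 < x\<close> \<open>x < 1\<close>, of n] unfolding k_def by linarith
  show ?thesis
  proof (cases "j \<le> k")
    case True
    then have "binomial_weight n j x \<le> binomial_weight n k x"
    proof (induction rule: dec_induct)
      case (step i)
      then show ?case
        using binomial_weight_le_Suc[OF \<open>0 < x\<close> \<open>x < 1\<close>, of i n] \<open>real k \<le> x * n\<close> by linarith
    qed simp
    then show ?thesis
      using nonneg[of k] by linarith
  next
    case False
    then have "Suc k \<le> j"
      by simp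
    then have "binomial_weight n j x \<le> binomial_weight n (Suc k) x"
    proof (induction rule: dec_induct)
      case (step i)
      then show ?case
        using binomial_weight_Suc_le[OF \<open>0 < x\<close> \<open>x < 1\<close>, of n i] \<open>x * n < k + 1\<close> \<open>x < 1\<close>
        by linarith
    qed simp
    then show ?thesis
      using Suc_k by linarith
  qed
qed

lemma binomial_weight_floor_lower_bound:
  fixes x :: real
  assumes "0 < x" "x \<le> 1/2"
  shows "1 / (2 * (real n + 1)) \<le> binomial_weight n (nat \<lfloor>x * n\<rfloor>) x"
proof -
  have "1 = (\<Sum>j\<le>n. binomial_weight n j x)"
    by (simp add: sum_binomial_weight)
  also have "\<dots> \<le> (\<Sum>j\<le>n. 2 * binomial_weight n (nat \<lfloor>x * n\<rfloor>) x)"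
    using binomial_weight_floor_dominates[OF assms] by (intro sum_mono) blast
  finally show ?thesis
    by (simp add: field_simps)
qed

lemma log2_binomial_weight_floor_ge:
  fixes x :: real
  assumes "0 < x" "x \<le> 1/2" "1 \<le> n"
  shows "- 2 - log 2 n \<le> log 2 (binomial_weight n (nat \<lfloor>x * n\<rfloor>) x)"
proof -
  have "1 / (4 * real n) \<le> 1 / (2 * (real n + 1))"
    using \<open>1 \<le> n\<close> by (simp add: field_simps)
  also have "\<dots> \<le> binomial_weight n (nat \<lfloor>x * n\<rfloor>) x"
    using assms(1,2) by (rule binomial_weight_floor_lower_bound)
  finally have "log 2 (1 / (4 * real n)) \<le> log 2 (binomial_weight n (nat \<lfloor>x * n\<rfloor>) x)"
    using \<open>1 \<le> n\<close> by (intro log_mono) auto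
  moreover have "log 2 (1 / (4 * real n)) = - 2 - log 2 n"
    using \<open>1 \<le> n\<close> log_pow_cancel[of 2 2] by (simp add: log_divide log_mult)
  ultimately show ?thesis
    by simp
qed

section \<open>Entropy estimates\<close>

lemma K_expansion:
  fixes q :: nat and \<alpha> :: real
  assumes "2 \<le> q" "0 < \<alpha>" "\<alpha> < 1"
  shows "K (1 / q) \<alpha> = log 2 q + \<alpha> * log 2 \<alpha> + (1 - \<alpha>) * (log 2 (1 - \<alpha>) - log 2 (real q - 1))"
proof -
  have first: "log 2 (\<alpha> / (1 / q)) = log 2 \<alpha> + log 2 q"
    using assms by (simp add: log_mult)
  have "(1 - \<alpha>) / (1 - 1 / q) = (1 - \<alpha>) * (q / (real q - 1))"
    using assms by (simp add: field_simps)
  then have second: "log 2 ((1 - \<alpha>) / (1 - 1 / q)) = log 2 (1 - \<alpha>) + log 2 q - log 2 (real q - 1)"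
    using assms by (simp add: log_mult log_divide)
  show ?thesis
    unfolding K_def first second by (simp add: algebra_simps)
qed

lemma K_eq_entropy:
  fixes q :: nat and \<alpha> :: real
  assumes "2 \<le> q" "0 < \<alpha>" "\<alpha> < 1"
  shows "K (1 / q) \<alpha> = (1 - h q (1 - \<alpha>)) * log 2 q"
proof -
  have base: "log q y = log 2 y / log 2 q" for y
    using assms(1) by (simp add: log_base_change)
  have "0 < log 2 q"
    using assms(1) by simp
  then show ?thesis
    unfolding K_expansion[OF assms] h_def base by (simp add: field_simps)
qed

lemma ln_2_ge_half: "1/2 \<le> ln (2::real)"
  using ln_le_minus_one[of "1/2::real"] by (simp add: ln_div)

lemma neg_mult_log2_le:
  fixes x :: real
  assumes "0 < x"
  shows "- x * log 2 x \<le> 2"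
proof -
  have "ln (1 / x) \<le> 1 / x - 1"
    using assms by (intro ln_le_minus_one) simp
  then have "- x * ln x \<le> 1"
    using assms by (simp add: ln_div field_simps)
  then have "- x * ln x / ln 2 \<le> 1 / ln 2"
    by (rule divide_right_mono) simp
  also have "\<dots> \<le> 2"
    using ln_2_ge_half by (simp add: field_simps)
  finally show ?thesis
    by (simp add: log_def)
qed

lemma floor_defect_log_le:
  fixes \<alpha> :: real and n :: nat
  assumes "0 < \<alpha>" "\<alpha> < 1" "1 \<le> n"
  defines "k \<equiv> nat \<lfloor>\<alpha> * n\<rfloor>"
  shows "- (\<alpha> * n - k) * log 2 \<alpha> \<le> log 2 n + 2"
proof -
  have "real k \<le> \<alpha> * n" and "\<alpha> * n < k + 1"
    using \<open>0 < \<alpha>\<close> unfolding k_def by (simp_all add: of_nat_nat) linarith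
  have "log 2 \<alpha> < 0" and "0 \<le> log 2 n"
    using assms by simp_all
  show ?thesis
  proof (cases "k = 0")
    case False
    then have "1 / n \<le> \<alpha>"
      using \<open>real k \<le> \<alpha> * n\<close> \<open>1 \<le> n\<close> by (simp add: field_simps)
    then have "log 2 (1 / n) \<le> log 2 \<alpha>"
      using assms by (subst log_le_cancel_iff) auto
    then have "- log 2 \<alpha> \<le> log 2 n"
      using \<open>1 \<le> n\<close> by (simp add: log_divide)
    moreover have "(\<alpha> * n - k) * (- log 2 \<alpha>) \<le> 1 * (- log 2 \<alpha>)"
      using \<open>\<alpha> * n < k + 1\<close> \<open>log 2 \<alpha> < 0\<close> by (intro mult_right_mono) auto
    ultimately show ?thesis
      by linarith
  next
    case True
    have "0 < \<alpha> * n" and "\<alpha> * n < 1"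
      using assms \<open>\<alpha> * n < k + 1\<close> True by simp_all
    have "log 2 (\<alpha> * n) = log 2 \<alpha> + log 2 n"
      using assms by (simp add: log_mult)
    then have "- (\<alpha> * n - k) * log 2 \<alpha> = - (\<alpha> * n) * log 2 (\<alpha> * n) + \<alpha> * n * log 2 n"
      using True by (simp add: algebra_simps)
    also have "\<dots> \<le> 2 + 1 * log 2 n"
      using neg_mult_log2_le[OF \<open>0 < \<alpha> * n\<close>] \<open>\<alpha> * n < 1\<close> \<open>0 \<le> log 2 n\<close>
      by (intro add_mono mult_right_mono) auto
    finally show ?thesis
      by simp
  qed
qed

lemma log2_sphere_deficit_le:
  fixes \<alpha> :: real and n q :: nat
  assumes "2 \<le> q" "0 < \<alpha>" "\<alpha> \<le> 1/2" "1 \<le> n"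
  defines "k \<equiv> nat \<lfloor>\<alpha> * n\<rfloor>"
  shows "log 2 (real q ^ n) - log 2 ((n choose k) * (real q - 1) ^ (n - k))
           \<le> n * K (1 / q) \<alpha> + 2 * log 2 n + 4"
proof -
  define la lb lc lq lC where "la = log 2 \<alpha>" and "lb = log 2 (1 - \<alpha>)" and "lc = log 2 (real q - 1)"
    and "lq = log 2 q" and "lC = log 2 (n choose k)"
  define \<delta> where "\<delta> = \<alpha> * n - k"
  have "real k \<le> \<alpha> * n"
    using \<open>0 < \<alpha>\<close> unfolding k_def by (simp add: of_nat_nat)
  then have "k \<le> n" and "0 \<le> \<delta>"
    using assms mult_left_le_one_le[of n \<alpha>] unfolding \<delta>_def by linarith+
  then have "0 < real (n choose k)"
    by simp
  have "log 2 (binomial_weight n k \<alpha>) = lC + k * la + (n - k) * lb"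
    using \<open>0 < real (n choose k)\<close> assms
    by (simp add: binomial_weight_def log_mult log_nat_power la_def lb_def lC_def)
  then have weight: "- lC - k * la - (n - k) * lb \<le> 2 + log 2 n"
    using log2_binomial_weight_floor_ge[OF assms(2-4), folded k_def] by linarith
  have logq: "log 2 (real q ^ n) = n * lq"
    using assms by (simp add: lq_def log_nat_power)
  have logS: "log 2 ((n choose k) * (real q - 1) ^ (n - k)) = lC + (n - k) * lc"
    using \<open>0 < real (n choose k)\<close> assms by (simp add: log_mult log_nat_power lc_def lC_def)
  have Kexp: "K (1 / q) \<alpha> = lq + \<alpha> * la + (1 - \<alpha>) * (lb - lc)"
    using assms unfolding la_def lb_def lc_def lq_def by (intro K_expansion) auto
  have rk: "real k = \<alpha> * n - \<delta>" and rnk: "real (n - k) = n - \<alpha> * n + \<delta>"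
    using \<open>k \<le> n\<close> unfolding \<delta>_def by simp_all
  \<comment> \<open>up to terms in \<open>\<delta>\<close>, the deficit minus \<open>n K\<close> is \<open>- log\<^sub>2\<close> of the binomial weight at \<open>k\<close>\<close>
  have "log 2 (real q ^ n) - log 2 ((n choose k) * (real q - 1) ^ (n - k)) - n * K (1 / q) \<alpha>
      = (- lC - k * la - (n - k) * lb) - \<delta> * la + \<delta> * lb - \<delta> * lc"
    unfolding logq logS Kexp rnk rk by (simp add: algebra_simps)
  moreover have "- \<delta> * la \<le> log 2 n + 2"
    unfolding \<delta>_def la_def k_def using assms by (intro floor_defect_log_le) auto
  moreover have "\<delta> * lb \<le> 0" and "0 \<le> \<delta> * lc"
    using \<open>0 \<le> \<delta>\<close> assms by (simp_all add: lb_def lc_def mult_nonneg_nonpos)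
  ultimately show ?thesis
    using weight by linarith
qed

lemma log2_cover_size_le:
  fixes N L :: real
  assumes "1 \<le> L" "L \<le> N"
  shows "log 2 (nat \<lfloor>N * ln N / L\<rfloor> + 1) \<le> log 2 N - log 2 L + log 2 (ln N + 1)"
proof -
  have "0 \<le> N * ln N / L"
    using assms by simp
  then have "real (nat \<lfloor>N * ln N / L\<rfloor> + 1) \<le> N * ln N / L + 1"
    by (simp add: of_nat_nat)
  also have "\<dots> \<le> N / L * (ln N + 1)"
    using assms by (simp add: field_simps)
  finally have "log 2 (nat \<lfloor>N * ln N / L\<rfloor> + 1) \<le> log 2 (N / L * (ln N + 1))"
    by (rule log_mono[rotated 2]) simp_all
  also have "\<dots> = log 2 N - log 2 L + log 2 (ln N + 1)"
    using assms by (simp add: log_mult log_divide add_nonneg_eq_0_iff)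
  finally show ?thesis .
qed

lemma log2_ln_power_le:
  assumes "2 \<le> q" "1 \<le> n"
  shows "log 2 (ln (real q ^ n) + 1) \<le> log 2 n + log 2 (log 2 q) + 1"
proof -
  have "1 \<le> log 2 q"
    using assms by simp
  have "ln q \<le> log 2 q"
    using assms ln_2_less_1 by (simp add: log_def field_simps mult_left_le_one_le)
  then have "ln (real q ^ n) \<le> n * log 2 q"
    using assms by (simp add: ln_realpow mult_left_mono)
  moreover have "1 * 1 \<le> n * log 2 q"
    using assms \<open>1 \<le> log 2 q\<close> by (intro mult_mono) auto
  ultimately have "ln (real q ^ n) + 1 \<le> 2 * n * log 2 q"
    by simp
  moreover have "0 \<le> ln (real q ^ n)"
    using assms by simp
  ultimately have "log 2 (ln (real q ^ n) + 1) \<le> log 2 (2 * n * log 2 q)"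
    by (intro log_mono) auto
  also have "\<dots> = log 2 n + log 2 (log 2 q) + 1"
    using assms \<open>1 \<le> log 2 q\<close> by (simp add: log_mult_pos)
  finally show ?thesis .
qed

section \<open>The covering-code algorithm\<close>

definition is_covering :: "nat \<Rightarrow> nat \<Rightarrow> nat \<Rightarrow> nat list list \<Rightarrow> bool" where
  "is_covering q n k Ys \<longleftrightarrow> set Ys \<subseteq> words q n \<and> (\<forall>x\<in>words q n. \<exists>y\<in>set Ys. agreements x y \<le> k)"

definition covering_radius :: "real \<Rightarrow> nat \<Rightarrow> nat" where
  "covering_radius \<alpha> n = nat \<lfloor>\<alpha> * n\<rfloor>"

definition covering_size :: "nat \<Rightarrow> real \<Rightarrow> nat \<Rightarrow> nat" where
  "covering_size q \<alpha> n = (let k = covering_radius \<alpha> n in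
     nat \<lfloor>real q ^ n * ln (real q ^ n) / real ((n choose k) * (q - 1) ^ (n - k))\<rfloor> + 1)"

definition covering_code :: "nat \<Rightarrow> real \<Rightarrow> nat \<Rightarrow> nat list list" where
  "covering_code q \<alpha> n =
     (SOME Ys. length Ys = covering_size q \<alpha> n \<and> is_covering q n (covering_radius \<alpha> n) Ys)"

definition advice_length :: "nat \<Rightarrow> real \<Rightarrow> nat \<Rightarrow> nat" where
  "advice_length q \<alpha> n = nat \<lceil>log 2 (covering_size q \<alpha> n)\<rceil>"

text \<open>The advice is the index of a codeword in binary; \<open>mod q\<close> only matters for junk
  indices and makes the algorithm valid on every tape.\<close>

definition covering_alg :: "nat \<Rightarrow> real \<Rightarrow> alg" where
  "covering_alg q \<alpha> n p t =
     covering_code q \<alpha> n ! tape_value (advice_length q \<alpha> n) t ! length p mod q"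

lemma covering_radius_le:
  assumes "\<alpha> \<le> 1"
  shows "covering_radius \<alpha> n \<le> n"
proof -
  have "\<alpha> * n \<le> 1 * real n"
    using assms by (intro mult_right_mono) auto
  then show ?thesis
    unfolding covering_radius_def by (simp add: nat_le_iff floor_le_iff)
qed

lemma covering_code_spec:
  assumes "2 \<le> q" "\<alpha> \<le> 1"
  shows "length (covering_code q \<alpha> n) = covering_size q \<alpha> n
    \<and> is_covering q n (covering_radius \<alpha> n) (covering_code q \<alpha> n)"
proof -
  define k where "k = covering_radius \<alpha> n"
  define L where "L = (n choose k) * (q - 1) ^ (n - k)"
  have "0 < L"
    using covering_radius_le[OF assms(2)] assms(1) unfolding L_def k_def by simp
  have deg: "L \<le> card {y \<in> words q n. agreements x y \<le> k}" if "x \<in> words q n" for x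
    unfolding L_def card_agreements_eq[OF that, symmetric]
    by (intro card_mono) (auto simp: finite_words)
  have "words q n \<noteq> {}"
    using replicate_in_words[of 0 q n] assms(1) by auto
  moreover have "real q ^ n * ln (real q ^ n) / L < covering_size q \<alpha> n"
    unfolding covering_size_def k_def[symmetric] L_def[symmetric] Let_def by linarith
  then have "card (words q n) * ln (card (words q n)) < real (covering_size q \<alpha> n) * L"
    using \<open>0 < L\<close> by (simp add: card_words pos_divide_less_eq)
  ultimately have "\<exists>Ys. length Ys = covering_size q \<alpha> n \<and> is_covering q n k Ys"
    using exists_covering_list[OF finite_words, of q n L "\<lambda>x y. agreements x y \<le> k"] deg
    unfolding is_covering_def by blast
  then show ?thesis
    unfolding covering_code_def k_def by (rule someI_ex)
qed

lemma one_le_covering_size: "1 \<le> covering_size q \<alpha> n"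
  by (simp add: covering_size_def Let_def)

lemma covering_size_le_advice: "covering_size q \<alpha> n \<le> 2 ^ advice_length q \<alpha> n"
proof -
  have "log 2 (covering_size q \<alpha> n) \<le> advice_length q \<alpha> n"
    using one_le_covering_size[of q \<alpha> n] unfolding advice_length_def by (simp add: of_nat_nat)
  then have "real (covering_size q \<alpha> n) \<le> 2 ^ advice_length q \<alpha> n"
    using one_le_covering_size[of q \<alpha> n] by (simp add: log_le_iff powr_realpow)
  then show ?thesis
    by (simp flip: of_nat_le_iff)
qed

lemma covering_alg_spec:
  assumes "2 \<le> q" "\<alpha> \<le> 1" "x \<in> words q n"
  shows "\<exists>t. cost (covering_alg q \<alpha>) x t \<le> covering_radius \<alpha> n
           \<and> reads_at_most (covering_alg q \<alpha>) x t (advice_length q \<alpha> n)"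
proof -
  define Ys where "Ys = covering_code q \<alpha> n"
  define b where "b = advice_length q \<alpha> n"
  obtain y where "y \<in> set Ys" and close: "agreements x y \<le> covering_radius \<alpha> n"
    using covering_code_spec[OF assms(1,2)] assms(3) unfolding Ys_def is_covering_def by blast
  then obtain j where "j < length Ys" "Ys ! j = y"
    by (metis in_set_conv_nth)
  moreover have "length Ys \<le> 2 ^ b"
    using covering_code_spec[OF assms(1,2)] covering_size_le_advice unfolding Ys_def b_def by simp
  ultimately have "j < 2 ^ b"
    by simp
  then have "tape_value b (bit j) = j"
    by (rule tape_value_bit)
  have "y \<in> words q n"
    using covering_code_spec[OF assms(1,2)] \<open>y \<in> set Ys\<close> unfolding Ys_def is_covering_def by blast
  have "covering_alg q \<alpha> n (take i x) (bit j) = y ! i" if "i < n" for i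
  proof -
    have "y ! i \<in> set y"
      using that \<open>y \<in> words q n\<close> unfolding words_def by simp
    then have "y ! i < q"
      using \<open>y \<in> words q n\<close> unfolding words_def by auto
    moreover have "length (take i x) = i"
      using that assms(3) unfolding words_def by simp
    ultimately show ?thesis
      using \<open>Ys ! j = y\<close> \<open>tape_value b (bit j) = j\<close>
      unfolding covering_alg_def Ys_def b_def by simp
  qed
  then have "cost (covering_alg q \<alpha>) x (bit j) = agreements x y"
    using assms(3) \<open>y \<in> words q n\<close> unfolding cost_def words_def
    by (simp add: agreements_eq_card cong: conj_cong)
  moreover have "reads_at_most (covering_alg q \<alpha>) x (bit j) b"
    unfolding reads_at_most_def
  proof (intro allI impI)
    fix t' i
    assume "\<forall>i<b. t' i = bit j i"
    then have "tape_value b t' = tape_value b (bit j)"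
      by (intro tape_value_cong) simp
    then show "covering_alg q \<alpha> (length x) (take i x) t' = covering_alg q \<alpha> (length x) (take i x) (bit j)"
      using assms(3) unfolding covering_alg_def b_def words_def by simp
  qed
  ultimately show ?thesis
    using close unfolding b_def by (intro exI[of _ "bit j"]) simp
qed

lemma advice_length_le:
  fixes q n :: nat
  assumes "2 \<le> q" "0 < \<alpha>" "\<alpha> \<le> 1/2"
  shows "advice_length q \<alpha> n \<le> K (1 / q) \<alpha> * n + 6 * (log 2 n + log 2 (log 2 q) + 1)"
proof (cases "n = 0")
  case True
  then have "advice_length q \<alpha> n = 0"
    by (simp add: advice_length_def covering_size_def)
  moreover have "0 \<le> log 2 (log 2 q)"
    using assms by simp
  ultimately show ?thesis
    using True by (simp add: log_def)
next
  case False
  define k where "k = covering_radius \<alpha> n"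
  define L where "L = real ((n choose k) * (q - 1) ^ (n - k))"
  have "k \<le> n"
    using covering_radius_le assms unfolding k_def by simp
  have "1 \<le> (n choose k) * (q - 1) ^ (n - k)"
    using \<open>k \<le> n\<close> assms by (simp add: Suc_le_eq)
  then have "1 \<le> L"
    unfolding L_def by (metis of_nat_1 of_nat_le_iff)
  have "L \<le> real q ^ n"
    using binomial_pred_power_le_power[of q n k] assms unfolding L_def
    by (metis of_nat_le_iff of_nat_power not_numeral_le_zero not_gr0)
  have "advice_length q \<alpha> n \<le> log 2 (covering_size q \<alpha> n) + 1"
    using one_le_covering_size[of q \<alpha> n] of_int_ceiling_le_add_one[of "log 2 (covering_size q \<alpha> n)"]
    unfolding advice_length_def by (simp add: of_nat_nat)
  also have "log 2 (covering_size q \<alpha> n) \<le> log 2 (real q ^ n) - log 2 L + log 2 (ln (real q ^ n) + 1)"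
    unfolding covering_size_def Let_def k_def[symmetric] L_def[symmetric]
    using \<open>1 \<le> L\<close> \<open>L \<le> real q ^ n\<close> by (rule log2_cover_size_le)
  also have "log 2 (real q ^ n) - log 2 L \<le> n * K (1 / q) \<alpha> + 2 * log 2 n + 4"
    using log2_sphere_deficit_le[of q \<alpha> n] assms False
    unfolding L_def k_def covering_radius_def by (simp add: of_nat_diff)
  also have "log 2 (ln (real q ^ n) + 1) \<le> log 2 n + log 2 (log 2 q) + 1"
    using assms False by (intro log2_ln_power_le) auto
  finally have "advice_length q \<alpha> n \<le> n * K (1 / q) \<alpha> + 3 * log 2 n + log 2 (log 2 q) + 6"
    by simp
  moreover have "0 \<le> log 2 n" and "0 \<le> log 2 (log 2 q)"
    using assms False by simp_all
  ultimately show ?thesis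
    by (simp only: distrib_left mult_1_right mult.commute)
qed

lemma covering_radius_le_mult: "0 \<le> \<alpha> \<Longrightarrow> real (covering_radius \<alpha> n) \<le> \<alpha> * n"
  by (simp add: covering_radius_def of_nat_nat)

lemma valid_covering_alg: "0 < q \<Longrightarrow> valid_alg q (covering_alg q \<alpha>)"
  by (simp add: valid_alg_def covering_alg_def)

lemma covering_alg_guarantee:
  assumes "2 \<le> q" "0 < \<alpha>" "\<alpha> \<le> 1/2" "set x \<subseteq> {..<q}"
  shows "\<exists>t b. real (cost (covering_alg q \<alpha>) x t) \<le> \<alpha> * real (length x) \<and>
    reads_at_most (covering_alg q \<alpha>) x t b \<and>
    real b \<le> K (1 / real q) \<alpha> * real (length x)
             + 6 * (log 2 (real (length x)) + log 2 (log 2 (real q)) + 1)"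
proof -
  have "x \<in> words q (length x)" and "\<alpha> \<le> 1"
    using assms by (simp_all add: words_def)
  then obtain t where cost: "cost (covering_alg q \<alpha>) x t \<le> covering_radius \<alpha> (length x)"
    and reads: "reads_at_most (covering_alg q \<alpha>) x t (advice_length q \<alpha> (length x))"
    using covering_alg_spec[OF assms(1)] by blast
  have "real (cost (covering_alg q \<alpha>) x t) \<le> \<alpha> * length x"
    using order_trans[OF of_nat_mono[OF cost] covering_radius_le_mult] assms(2) by simp
  then show ?thesis
    using reads advice_length_le[OF assms(1-3), of "length x"]
    by (intro exI[of _ t] exI[of _ "advice_length q \<alpha> (length x)"]) simp
qed

theorem theorem11:
  shows "\<exists>C::real. \<forall>q::nat. \<forall>\<alpha>::real. q \<ge> 2 \<and> 0 < \<alpha> \<and> \<alpha> < 1 / real q \<longrightarrow>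
     K (1 / real q) \<alpha> = (1 - h q (1 - \<alpha>)) * log 2 (real q) \<and>
     (\<exists>A. valid_alg q A \<and>
        (\<forall>x. set x \<subseteq> {..<q} \<longrightarrow>
           (\<exists>t b. real (cost A x t) \<le> \<alpha> * real (length x) \<and>
                  reads_at_most A x t b \<and>
                  real b \<le> K (1 / real q) \<alpha> * real (length x)
                           + C * (log 2 (real (length x)) + log 2 (log 2 (real q)) + 1))))"
proof (intro exI[of _ 6] allI impI conjI)
  fix q :: nat and \<alpha> :: real
  assume "q \<ge> 2 \<and> 0 < \<alpha> \<and> \<alpha> < 1 / real q"
  then have q: "2 \<le> q" and "0 < \<alpha>" and "\<alpha> < 1 / q"
    by auto
  moreover have "1 / real q \<le> 1 / 2"
    using q by (simp add: field_simps)
  ultimately have "\<alpha> \<le> 1 / 2"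
    by linarith
  then show "K (1 / real q) \<alpha> = (1 - h q (1 - \<alpha>)) * log 2 (real q)"
    using q \<open>0 < \<alpha>\<close> by (intro K_eq_entropy) auto
  show "\<exists>A. valid_alg q A \<and> (\<forall>x. set x \<subseteq> {..<q} \<longrightarrow>
      (\<exists>t b. real (cost A x t) \<le> \<alpha> * real (length x) \<and> reads_at_most A x t b \<and>
         real b \<le> K (1 / real q) \<alpha> * real (length x)
                  + 6 * (log 2 (real (length x)) + log 2 (log 2 (real q)) + 1)))"
    using valid_covering_alg[of q \<alpha>] covering_alg_guarantee[OF q \<open>0 < \<alpha>\<close> \<open>\<alpha> \<le> 1 / 2\<close>] q
    by auto
qed

end
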